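(* Let $\Sigma$ be an alphabet. The set $\mathrm{RevL}(\mathbb{F}_2,\Sigma)$ is closed under the Boolean operations (complementation in $\Sigma^*$, finite intersection and finite union).
   Context: $\mathbb{F}_2$ is the two-element field. For a semiring $S$ and finite nonempty alphabet $\Sigma$, a series is a map $r\colon\Sigma^*\to S$ with value $(r,w)$ and support $\mathrm{supp}(r)=\{w\mid(r,w)\neq0\}$. A weighted automaton over $S$ and $\Sigma$ is $\mathcal{A}=(Q,\sigma,\iota,\tau)$ with $Q$ finite, $\sigma\colon Q\times\Sigma\times Q\to S$, $\iota,\tau\colon Q\to S$; a run on $w=a_1\cdots a_t$ is $q_0a_1q_1\cdots a_tq_t$ with all $\sigma(q_{k-1},a_k,q_k)\neq0$, of weight $\iota(q_0)\sigma(q_0,a_1,q_1)\cdots\sigma(q_{t-1},a_t,q_t)\tau(q_t)$, and $(\|\mathcal{A}\|,w)$ is the sum of weights of all runs on $w$. $\mathcal{A}$ is reversible if for all $p,p',q,q'\in Q$, $a\in\Sigma$: $\sigma(p,a,q)\neq0\neq\sigma(p,a,q')$ implies $q=q'$, and $\sigma(p,a,q)\neq0\neq\sigma(p',a,q)$ implies $p=p'$. $\mathrm{RevL}(S,\Sigma)$ is the set of supports of series realised by reversible weighted automata over $S$ and $\Sigma$. *)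

theory Defs
  imports Main "HOL-Library.Z2"
begin

text \<open>The two-element field F_2 is the type bit from HOL-Library.Z2.\<close>

record ('a, 's) wautomaton =
  states :: "nat set"
  trans  :: "nat \<Rightarrow> 'a \<Rightarrow> nat \<Rightarrow> 's"
  init   :: "nat \<Rightarrow> 's"
  fin    :: "nat \<Rightarrow> 's"

definition wa_wf :: "('a, 's) wautomaton \<Rightarrow> bool" where
  "wa_wf A \<longleftrightarrow> finite (states A)"

definition runs :: "('a, 's::zero) wautomaton \<Rightarrow> 'a list \<Rightarrow> nat list set" where
  "runs A w = {qs. length qs = Suc (length w) \<and> set qs \<subseteq> states A \<and>
      (\<forall>k < length w. trans A (qs ! k) (w ! k) (qs ! Suc k) \<noteq> 0)}"

definition run_weight :: "('a, 's::semiring_1) wautomaton \<Rightarrow> 'a list \<Rightarrow> nat list \<Rightarrow> 's" where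
  "run_weight A w qs = init A (qs ! 0) *
      prod_list (map (\<lambda>k. trans A (qs ! k) (w ! k) (qs ! Suc k)) [0..<length w]) *
      fin A (qs ! length w)"

definition behaviour :: "('a, 's::semiring_1) wautomaton \<Rightarrow> 'a list \<Rightarrow> 's" where
  "behaviour A w = (\<Sum>qs \<in> runs A w. run_weight A w qs)"

definition supp :: "('a list \<Rightarrow> 's::zero) \<Rightarrow> 'a list set" where
  "supp r = {w. r w \<noteq> 0}"

definition reversible :: "('a, 's::zero) wautomaton \<Rightarrow> bool" where
  "reversible A \<longleftrightarrow>
    (\<forall>p\<in>states A. \<forall>q\<in>states A. \<forall>q'\<in>states A. \<forall>a.
        trans A p a q \<noteq> 0 \<and> trans A p a q' \<noteq> 0 \<longrightarrow> q = q') \<and>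
    (\<forall>p\<in>states A. \<forall>p'\<in>states A. \<forall>q\<in>states A. \<forall>a.
        trans A p a q \<noteq> 0 \<and> trans A p' a q \<noteq> 0 \<longrightarrow> p = p')"

text \<open>RevL(S, Sigma): supports of series realised by reversible weighted automata
  over S; the alphabet Sigma is the (finite) type 'a, S is the type 's.\<close>
definition RevL :: "('a::finite list \<Rightarrow> 's::semiring_1) itself \<Rightarrow> 'a list set set" where
  "RevL _ = {supp (behaviour A) | A :: ('a, 's) wautomaton. wa_wf A \<and> reversible A}"

end

theory Submission
  imports Defs "HOL-Library.Nat_Bijection"
begin

text \<open>Adjoining a fresh state that is initial, final and carries only a self-loop of weight 1
  adds exactly one run of weight 1 on every word, so it turns a realised series r into 1 + r;
  over F_2, 1 + r(w) vanishes exactly where r(w) does not. The product automaton realises the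
  pointwise product of two series, whose support is the intersection of the supports because
  F_2 has no zero divisors. Both constructions preserve reversibility, and unions follow by
  De Morgan.\<close>

lemma runs_nth_in_states: "qs \<in> runs A w \<Longrightarrow> k \<le> length w \<Longrightarrow> qs ! k \<in> states A"
  unfolding runs_def using nth_mem[of k qs] by auto

lemma finite_runs: "finite (states A) \<Longrightarrow> finite (runs A w)"
  by (rule rev_finite_subset[OF finite_lists_length_eq[of "states A" "Suc (length w)"]])
    (auto simp: runs_def)

lemma run_weight_cong:
  assumes "init A (qs ! 0) = init B (qs ! 0)" and "fin A (qs ! length w) = fin B (qs ! length w)"
    and "\<And>k. k < length w \<Longrightarrow>
      trans A (qs ! k) (w ! k) (qs ! Suc k) = trans B (qs ! k) (w ! k) (qs ! Suc k)"
  shows "run_weight A w qs = run_weight B w qs"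
proof -
  have steps: "map (\<lambda>k. trans A (qs ! k) (w ! k) (qs ! Suc k)) [0..<length w]
      = map (\<lambda>k. trans B (qs ! k) (w ! k) (qs ! Suc k)) [0..<length w]"
    using assms(3) by simp
  show ?thesis
    unfolding run_weight_def assms(1,2) steps ..
qed

lemma mem_RevL_iff:
  "L \<in> RevL TYPE('a::finite list \<Rightarrow> 's::semiring_1) \<longleftrightarrow>
    (\<exists>A :: ('a, 's) wautomaton. wa_wf A \<and> reversible A \<and> L = supp (behaviour A))"
  unfolding RevL_def by auto

definition empty_wa :: "('a, 's::zero) wautomaton" where
  "empty_wa = \<lparr>states = {}, trans = (\<lambda>p a q. 0), init = (\<lambda>p. 0), fin = (\<lambda>p. 0)\<rparr>"

lemma runs_empty_wa: "runs empty_wa w = {}"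
  by (auto simp: runs_def empty_wa_def)

lemma behaviour_empty_wa: "behaviour empty_wa w = 0"
  by (simp add: behaviour_def runs_empty_wa)

lemma reversible_empty_wa: "reversible empty_wa"
  by (simp add: reversible_def empty_wa_def)

definition wa_plus_one :: "('a, 's::{zero, one}) wautomaton \<Rightarrow> nat \<Rightarrow> ('a, 's) wautomaton" where
  "wa_plus_one A s = \<lparr>states = insert s (states A),
     trans = (\<lambda>p a q. if p = s \<and> q = s then 1 else if p = s \<or> q = s then 0 else trans A p a q),
     init = (\<lambda>p. if p = s then 1 else init A p),
     fin = (\<lambda>p. if p = s then 1 else fin A p)\<rparr>"

lemma runs_wa_plus_one:
  fixes A :: "('a, 's::zero_neq_one) wautomaton"
  assumes s: "s \<notin> states A"
  shows "runs (wa_plus_one A s) w = insert (replicate (Suc (length w)) s) (runs A w)"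
proof (intro equalityI subsetI)
  fix qs assume qs: "qs \<in> runs (wa_plus_one A s) w"
  then have len: "length qs = Suc (length w)"
    and step: "\<And>k. k < length w \<Longrightarrow> trans (wa_plus_one A s) (qs ! k) (w ! k) (qs ! Suc k) \<noteq> 0"
    by (auto simp: runs_def)
  have at_s: "qs ! k = s \<longleftrightarrow> qs ! 0 = s" if "k \<le> length w" for k
    using that
  proof (induction k)
    case (Suc k)
    then show ?case using step[of k] by (auto simp: wa_plus_one_def split: if_splits)
  qed simp
  show "qs \<in> insert (replicate (Suc (length w)) s) (runs A w)"
  proof (cases "qs ! 0 = s")
    case True
    then have "qs ! k = s" if "k \<le> length w" for k
      using at_s[OF that] by blast
    then have "qs = replicate (Suc (length w)) s"
      using len by (intro nth_equalityI) (auto simp del: replicate_Suc)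
    then show ?thesis by simp
  next
    case False
    then have avoids_s: "qs ! k \<noteq> s" if "k \<le> length w" for k
      using at_s[OF that] by blast
    have "set qs \<subseteq> states A"
    proof
      fix x assume "x \<in> set qs"
      then obtain k where "k \<le> length w" "x = qs ! k"
        using len by (metis in_set_conv_nth less_Suc_eq_le)
      with runs_nth_in_states[OF qs] avoids_s show "x \<in> states A"
        by (auto simp: wa_plus_one_def)
    qed
    moreover have "trans A (qs ! k) (w ! k) (qs ! Suc k) \<noteq> 0" if "k < length w" for k
      using step[OF that] avoids_s[of k] avoids_s[of "Suc k"] that by (simp add: wa_plus_one_def)
    ultimately show ?thesis
      using len by (simp add: runs_def)
  qed
next
  fix qs assume "qs \<in> insert (replicate (Suc (length w)) s) (runs A w)"
  then show "qs \<in> runs (wa_plus_one A s) w"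
  proof
    assume "qs \<in> runs A w"
    moreover have "qs ! k \<noteq> s" if "k \<le> length w" for k
      using runs_nth_in_states[OF \<open>qs \<in> runs A w\<close> that] s by auto
    ultimately show ?thesis
      by (auto simp: runs_def wa_plus_one_def)
  qed (auto simp: runs_def wa_plus_one_def simp del: replicate_Suc)
qed

lemma behaviour_wa_plus_one:
  fixes A :: "('a, 's::semiring_1) wautomaton"
  assumes s: "s \<notin> states A" and fin: "finite (states A)"
  shows "behaviour (wa_plus_one A s) w = 1 + behaviour A w"
proof -
  define loop where "loop = replicate (Suc (length w)) s"
  have "loop \<notin> runs A w"
    using s by (auto simp: runs_def loop_def)
  moreover have "run_weight (wa_plus_one A s) w loop = 1"
  proof -
    have loop_nth: "loop ! k = s" if "k \<le> length w" for k
      using that by (simp add: loop_def del: replicate_Suc)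
    have "map (\<lambda>k. trans (wa_plus_one A s) (loop ! k) (w ! k) (loop ! Suc k)) [0..<length w]
        = replicate (length w) 1"
      by (rule nth_equalityI) (simp_all add: loop_nth wa_plus_one_def)
    then show ?thesis
      unfolding run_weight_def by (simp add: loop_nth wa_plus_one_def)
  qed
  moreover have "run_weight (wa_plus_one A s) w qs = run_weight A w qs" if "qs \<in> runs A w" for qs
  proof -
    have "qs ! k \<noteq> s" if "k \<le> length w" for k
      using runs_nth_in_states[OF \<open>qs \<in> runs A w\<close> that] s by auto
    then show ?thesis
      by (intro run_weight_cong) (simp_all add: wa_plus_one_def)
  qed
  ultimately show ?thesis
    unfolding behaviour_def runs_wa_plus_one[OF s] loop_def[symmetric]
    by (simp add: finite_runs[OF fin])
qed

lemma reversible_wa_plus_one: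
  assumes "s \<notin> states A" and "reversible A"
  shows "reversible (wa_plus_one A s)"
  using assms unfolding reversible_def wa_plus_one_def by (auto split: if_splits; blast)

definition wa_product :: "('a, 's::times) wautomaton \<Rightarrow> ('a, 's) wautomaton \<Rightarrow> ('a, 's) wautomaton" where
  "wa_product A B = \<lparr>states = prod_encode ` (states A \<times> states B),
     trans = (\<lambda>x a y. trans A (fst (prod_decode x)) a (fst (prod_decode y)) *
                       trans B (snd (prod_decode x)) a (snd (prod_decode y))),
     init = (\<lambda>x. init A (fst (prod_decode x)) * init B (snd (prod_decode x))),
     fin = (\<lambda>x. fin A (fst (prod_decode x)) * fin B (snd (prod_decode x)))\<rparr>"

definition zip_encode :: "nat list \<Rightarrow> nat list \<Rightarrow> nat list" where
  "zip_encode ps qs = map prod_encode (zip ps qs)"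

lemma runs_wa_product:
  fixes A B :: "('a, 's::semiring_no_zero_divisors) wautomaton"
  shows "runs (wa_product A B) w = case_prod zip_encode ` (runs A w \<times> runs B w)"
proof (intro equalityI subsetI)
  fix qs assume qs: "qs \<in> runs (wa_product A B) w"
  define ps1 where "ps1 = map (fst \<circ> prod_decode) qs"
  define ps2 where "ps2 = map (snd \<circ> prod_decode) qs"
  have "qs = zip_encode ps1 ps2"
    by (rule nth_equalityI) (simp_all add: zip_encode_def ps1_def ps2_def)
  moreover have "ps1 \<in> runs A w" "ps2 \<in> runs B w"
    using qs by (auto simp: runs_def ps1_def ps2_def wa_product_def)
  ultimately show "qs \<in> case_prod zip_encode ` (runs A w \<times> runs B w)"
    by (intro image_eqI[of _ _ "(ps1, ps2)"]) simp_all
next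
  fix qs assume "qs \<in> case_prod zip_encode ` (runs A w \<times> runs B w)"
  then obtain ps1 ps2 where ps1: "ps1 \<in> runs A w" and ps2: "ps2 \<in> runs B w"
    and qs: "qs = zip_encode ps1 ps2"
    by auto
  have "set (zip ps1 ps2) \<subseteq> states A \<times> states B"
    using ps1 ps2 by (auto simp: runs_def dest: set_zip_leftD set_zip_rightD)
  then have "set qs \<subseteq> states (wa_product A B)"
    by (auto simp: qs zip_encode_def wa_product_def)
  with ps1 ps2 show "qs \<in> runs (wa_product A B) w"
    by (simp add: runs_def qs zip_encode_def wa_product_def)
qed

lemma inj_on_zip_encode: "inj_on (case_prod zip_encode) {(ps, qs). length ps = length qs}"
proof (rule inj_onI, clarsimp)
  fix ps1 ps2 qs1 qs2
  assume len: "length ps1 = length ps2" "length qs1 = length qs2"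
    and "zip_encode ps1 ps2 = zip_encode qs1 qs2"
  then have "zip ps1 ps2 = zip qs1 qs2"
    by (simp add: zip_encode_def inj_map_eq_map[OF inj_prod_encode])
  with len show "ps1 = qs1 \<and> ps2 = qs2"
    by (metis map_fst_zip map_snd_zip)
qed

lemma prod_list_map_mult:
  fixes f g :: "'b \<Rightarrow> 'c::comm_monoid_mult"
  shows "prod_list (map (\<lambda>k. f k * g k) xs) = prod_list (map f xs) * prod_list (map g xs)"
  by (induction xs) (simp_all add: ac_simps)

lemma run_weight_wa_product:
  fixes A B :: "('a, 's::comm_semiring_1) wautomaton"
  assumes "length ps1 = Suc (length w)" "length ps2 = Suc (length w)"
  shows "run_weight (wa_product A B) w (zip_encode ps1 ps2)
    = run_weight A w ps1 * run_weight B w ps2"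
proof -
  have steps:
    "map (\<lambda>k. trans (wa_product A B) (zip_encode ps1 ps2 ! k) (w ! k) (zip_encode ps1 ps2 ! Suc k))
      [0..<length w]
    = map (\<lambda>k. trans A (ps1 ! k) (w ! k) (ps1 ! Suc k) * trans B (ps2 ! k) (w ! k) (ps2 ! Suc k))
      [0..<length w]"
    using assms by (simp add: zip_encode_def wa_product_def)
  have ends: "zip_encode ps1 ps2 ! 0 = prod_encode (ps1 ! 0, ps2 ! 0)"
    "zip_encode ps1 ps2 ! length w = prod_encode (ps1 ! length w, ps2 ! length w)"
    using assms by (simp_all add: zip_encode_def)
  show ?thesis
    unfolding run_weight_def steps prod_list_map_mult
    by (simp add: ends wa_product_def ac_simps)
qed

lemma behaviour_wa_product:
  fixes A B :: "('a, 's::{comm_semiring_1, semiring_no_zero_divisors}) wautomaton"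
  shows "behaviour (wa_product A B) w = behaviour A w * behaviour B w"
proof -
  have "behaviour (wa_product A B) w
      = (\<Sum>(ps1, ps2) \<in> runs A w \<times> runs B w. run_weight (wa_product A B) w (zip_encode ps1 ps2))"
    unfolding behaviour_def runs_wa_product
    by (subst sum.reindex[OF inj_on_subset[OF inj_on_zip_encode]])
      (auto simp: runs_def case_prod_beta comp_def)
  also have "\<dots> = (\<Sum>(ps1, ps2) \<in> runs A w \<times> runs B w. run_weight A w ps1 * run_weight B w ps2)"
    by (rule sum.cong) (auto simp: runs_def run_weight_wa_product)
  also have "\<dots> = behaviour A w * behaviour B w"
    unfolding behaviour_def sum_product sum.cartesian_product by simp
  finally show ?thesis .
qed

lemma reversible_wa_product:
  fixes A B :: "('a, 's::semiring_0) wautomaton"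
  assumes "reversible A" and "reversible B"
  shows "reversible (wa_product A B)"
  using assms unfolding reversible_def wa_product_def
  by (auto dest!: mult_not_zero; blast)

lemma UNIV_in_RevL: "UNIV \<in> RevL TYPE('a::finite list \<Rightarrow> 's::semiring_1)"
proof -
  let ?E = "empty_wa :: ('a, 's) wautomaton"
  have fresh: "0 \<notin> states ?E" and fin: "finite (states ?E)"
    by (simp_all add: empty_wa_def)
  have "wa_wf (wa_plus_one ?E 0)"
    using fin by (simp add: wa_wf_def wa_plus_one_def)
  moreover have "reversible (wa_plus_one ?E 0)"
    using fresh reversible_empty_wa by (rule reversible_wa_plus_one)
  moreover have "supp (behaviour (wa_plus_one ?E 0)) = UNIV"
    by (simp add: supp_def behaviour_wa_plus_one[OF fresh fin] behaviour_empty_wa)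
  ultimately show ?thesis
    unfolding mem_RevL_iff by blast
qed

lemma Int_in_RevL:
  fixes L1 L2 :: "'a::finite list set"
  assumes "L1 \<in> RevL TYPE('a list \<Rightarrow> 's::{comm_semiring_1, semiring_no_zero_divisors})"
    and "L2 \<in> RevL TYPE('a list \<Rightarrow> 's)"
  shows "L1 \<inter> L2 \<in> RevL TYPE('a list \<Rightarrow> 's)"
proof -
  obtain A B :: "('a, 's) wautomaton"
    where A: "wa_wf A" "reversible A" "L1 = supp (behaviour A)"
      and B: "wa_wf B" "reversible B" "L2 = supp (behaviour B)"
    using assms unfolding mem_RevL_iff by blast
  have "wa_wf (wa_product A B)"
    using A(1) B(1) by (simp add: wa_wf_def wa_product_def)
  moreover have "supp (behaviour (wa_product A B)) = L1 \<inter> L2"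
    using A(3) B(3) by (auto simp: supp_def behaviour_wa_product)
  ultimately show ?thesis
    unfolding mem_RevL_iff using A(2) B(2) reversible_wa_product by blast
qed

lemma Inter_in_RevL:
  fixes F :: "'a::finite list set set"
  assumes "finite F" and "F \<subseteq> RevL TYPE('a list \<Rightarrow> 's::{comm_semiring_1, semiring_no_zero_divisors})"
  shows "\<Inter> F \<in> RevL TYPE('a list \<Rightarrow> 's)"
  using assms by (induction F rule: finite_induct) (simp_all add: UNIV_in_RevL Int_in_RevL)

lemma supp_one_plus_bit: "supp (\<lambda>w. 1 + r w :: bit) = - supp r"
proof -
  have "1 + x \<noteq> 0 \<longleftrightarrow> x = 0" for x :: bit
    by (cases x) simp_all
  then show ?thesis
    by (auto simp: supp_def)
qed

lemma Compl_in_RevL: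
  assumes "L \<in> RevL TYPE('a::finite list \<Rightarrow> bit)"
  shows "- L \<in> RevL TYPE('a list \<Rightarrow> bit)"
proof -
  obtain A :: "('a, bit) wautomaton" where A: "wa_wf A" "reversible A" "L = supp (behaviour A)"
    using assms unfolding mem_RevL_iff by blast
  then have fin: "finite (states A)"
    by (simp add: wa_wf_def)
  obtain s :: nat where s: "s \<notin> states A"
    using ex_new_if_finite[OF infinite_UNIV_nat fin] by blast
  have "behaviour (wa_plus_one A s) = (\<lambda>w. 1 + behaviour A w)"
    by (intro ext behaviour_wa_plus_one[OF s fin])
  then have "supp (behaviour (wa_plus_one A s)) = - L"
    by (simp only: A(3) supp_one_plus_bit)
  moreover have "wa_wf (wa_plus_one A s)"
    using fin by (simp add: wa_wf_def wa_plus_one_def)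
  moreover have "reversible (wa_plus_one A s)"
    using s A(2) by (rule reversible_wa_plus_one)
  ultimately show ?thesis
    unfolding mem_RevL_iff by blast
qed

theorem proposition6:
  fixes L :: "'a::finite list set" and F :: "'a list set set"
  shows "(L \<in> RevL TYPE('a list \<Rightarrow> bit) \<longrightarrow> - L \<in> RevL TYPE('a list \<Rightarrow> bit))
    \<and> (finite F \<and> F \<subseteq> RevL TYPE('a list \<Rightarrow> bit) \<longrightarrow>
         \<Inter> F \<in> RevL TYPE('a list \<Rightarrow> bit) \<and> \<Union> F \<in> RevL TYPE('a list \<Rightarrow> bit))"
proof (intro conjI impI; (elim conjE)?)
  show "L \<in> RevL TYPE('a list \<Rightarrow> bit) \<Longrightarrow> - L \<in> RevL TYPE('a list \<Rightarrow> bit)"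
    by (rule Compl_in_RevL)
next
  assume "finite F" and F: "F \<subseteq> RevL TYPE('a list \<Rightarrow> bit)"
  then show "\<Inter> F \<in> RevL TYPE('a list \<Rightarrow> bit)"
    by (rule Inter_in_RevL)
  have "uminus ` F \<subseteq> RevL TYPE('a list \<Rightarrow> bit)"
    using F Compl_in_RevL by blast
  with \<open>finite F\<close> have "- \<Inter> (uminus ` F) \<in> RevL TYPE('a list \<Rightarrow> bit)"
    by (intro Compl_in_RevL Inter_in_RevL) simp_all
  then show "\<Union> F \<in> RevL TYPE('a list \<Rightarrow> bit)"
    by (simp add: uminus_Inf)
qed

end
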